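(* Let $0<\lambda<1$ and $0<p<1$. Let \[ f(z)=\frac{z}{1-\frac{z}{p}+\lambda z\int_z^p\omega(t)\,dt}, \] where $\omega$ is analytic in $\mathbb{D}=\{z:|z|<1\}$ with $|\omega(z)|\le1$ on $\mathbb{D}$, so that $f\in\mathcal{U}_m(\lambda)$ has a simple pole at $z=p$, and let $f(z)=\sum_{k=-1}^\infty b_k(z-p)^k$ be the Laurent series of $f$ at $z=p$. Then, as $\omega$ ranges over all such functions, the region of variability of the residue $b_{-1}$ is the disk \[ \left\{\frac{-p^2}{1+\lambda p^2u}:\ u\in\overline{\mathbb{D}}\right\}, \] and \[ \frac{p^2}{1+\lambda p^2}\le |b_{-1}|\le \frac{p^2}{1-\lambda p^2}, \] where the upper bound is sharp, with equality attained when $\omega(z)\equiv -1$.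
   Context: For $\lambda\in(0,1)$ and $p\in(0,1)$, $\mathcal{U}_m(\lambda)$ denotes the family of functions $f$ meromorphic in $\mathbb{D}$ with a pole at $z=p$, having a Taylor expansion $f(z)=z+\sum_{k=2}^\infty a_k z^k$ for $|z|<p$, and satisfying $\left|\frac{z}{f(z)}-z\left(\frac{z}{f(z)}\right)'-1\right|<\lambda$ for every $z\in\mathbb{D}$. The integral is along any path in $\mathbb{D}$ from $z$ to $p$. *)

theory Defs
  imports "HOL-Complex_Analysis.Complex_Analysis"
begin

text \<open>The function f(z) = z / (1 - z/p + lam z int_z^p omega(t) dt), the integral taken
  along the straight segment from z to p (any path in the disc gives the same value).\<close>
definition fUm :: "real \<Rightarrow> real \<Rightarrow> (complex \<Rightarrow> complex) \<Rightarrow> complex \<Rightarrow> complex" where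
  "fUm lam p \<omega> z = z / (1 - z / complex_of_real p
      + complex_of_real lam * z * contour_integral (linepath z (complex_of_real p)) \<omega>)"

definition admissible_omega :: "(complex \<Rightarrow> complex) \<Rightarrow> bool" where
  "admissible_omega \<omega> \<longleftrightarrow> \<omega> holomorphic_on ball 0 1 \<and> (\<forall>z\<in>ball 0 1. norm (\<omega> z) \<le> 1)"

end

theory Submission
  imports Defs
begin

text \<open>Near \<open>p\<close> the integral in the denominator of \<open>f\<close> equals \<open>W p - W z\<close> for a local primitive
  \<open>W\<close> of \<open>\<omega>\<close>, so the denominator \<open>g\<close> is holomorphic with a simple zero at \<open>p\<close> and
  \<open>g'(p) = -(1 + \<lambda> p\<^sup>2 \<omega>(p)) / p\<close>. Hence the residue is \<open>p / g'(p) = -p\<^sup>2 / (1 + \<lambda> p\<^sup>2 \<omega>(p))\<close>.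
  As \<open>\<omega>(p)\<close> takes every value of the closed unit disc (already for constant \<open>\<omega>\<close>), this is the
  region of variability, and the bounds on the residue are those of \<open>|1 + \<lambda> p\<^sup>2 u|\<close> for \<open>|u| \<le> 1\<close>.\<close>

lemma abs_mult_square_less_one:
  fixes lam p :: real
  assumes "\<bar>lam\<bar> \<le> 1" "\<bar>p\<bar> < 1"
  shows "\<bar>lam * p^2\<bar> < 1"
proof -
  have "p^2 < 1" using assms(2) by (simp add: abs_square_less_1)
  then show ?thesis
    using mult_left_le_one_le[of "p^2" "\<bar>lam\<bar>"] assms(1) by (simp add: abs_mult)
qed

lemma norm_one_plus_scaled_bounds:
  fixes a :: real and u :: complex
  assumes "norm u \<le> 1"
  shows "1 - \<bar>a\<bar> \<le> norm (1 + of_real a * u)" and "norm (1 + of_real a * u) \<le> 1 + \<bar>a\<bar>"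
proof -
  have au: "norm (of_real a * u) \<le> \<bar>a\<bar>"
    using assms by (simp add: norm_mult mult_left_le)
  show "1 - \<bar>a\<bar> \<le> norm (1 + of_real a * u)"
    using norm_diff_ineq[of 1 "of_real a * u"] au by simp
  show "norm (1 + of_real a * u) \<le> 1 + \<bar>a\<bar>"
    using norm_triangle_ineq[of 1 "of_real a * u"] au by simp
qed

lemma norm_divide_one_plus_scaled_bounds:
  fixes a :: real and u z :: complex
  assumes "\<bar>a\<bar> < 1" "norm u \<le> 1"
  shows "norm z / (1 + \<bar>a\<bar>) \<le> norm (z / (1 + of_real a * u))"
    and "norm (z / (1 + of_real a * u)) \<le> norm z / (1 - \<bar>a\<bar>)"
  using norm_one_plus_scaled_bounds[OF assms(2), of a] assms(1)
  by (auto simp: norm_divide intro!: divide_left_mono mult_pos_pos)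

lemma fUm_eq_primitive_near:
  fixes p :: real
  assumes "\<omega> holomorphic_on S" "open S" "of_real p \<in> S"
  obtains r W where "0 < r"
    and "\<And>z. z \<in> ball (of_real p) r \<Longrightarrow> (W has_field_derivative \<omega> z) (at z)"
    and "\<And>z. z \<in> ball (of_real p) r \<Longrightarrow>
           fUm lam p \<omega> z = z / (1 - z / of_real p + of_real lam * z * (W (of_real p) - W z))"
proof -
  let ?p = "complex_of_real p"
  obtain r where r: "0 < r" "ball ?p r \<subseteq> S"
    using assms(2,3) openE by blast
  then have "\<omega> holomorphic_on ball ?p r"
    using assms(1) holomorphic_on_subset by blast
  then obtain W
    where W: "\<And>z. z \<in> ball ?p r \<Longrightarrow> (W has_field_derivative \<omega> z) (at z within ball ?p r)"
    using holomorphic_convex_primitive'[OF convex_ball open_ball] by blast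
  have W_at: "(W has_field_derivative \<omega> z) (at z)" if "z \<in> ball ?p r" for z
    using W[OF that] that by (metis at_within_open open_ball)
  have "contour_integral (linepath z ?p) \<omega> = W ?p - W z" if "z \<in> ball ?p r" for z
  proof -
    have "path_image (linepath z ?p) \<subseteq> ball ?p r"
      using that r(1) by (simp add: closed_segment_subset convex_ball)
    from contour_integral_primitive[OF W valid_path_linepath this]
    show ?thesis by (intro contour_integral_unique) simp
  qed
  with r W_at show thesis
    by (intro that[of r W]) (simp_all add: fUm_def)
qed

lemma residue_fUm:
  fixes lam p :: real
  assumes "\<omega> holomorphic_on S" "open S" "of_real p \<in> S" "p \<noteq> 0"
    and nonzero: "1 + of_real (lam * p^2) * \<omega> (of_real p) \<noteq> 0"
  shows "residue (fUm lam p \<omega>) (of_real p)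
           = - ((of_real p)^2) / (1 + of_real (lam * p^2) * \<omega> (of_real p))"
proof -
  let ?p = "complex_of_real p"
  obtain r W where r: "0 < r"
    and W: "\<And>z. z \<in> ball ?p r \<Longrightarrow> (W has_field_derivative \<omega> z) (at z)"
    and f_eq: "\<And>z. z \<in> ball ?p r \<Longrightarrow>
                 fUm lam p \<omega> z = z / (1 - z / ?p + of_real lam * z * (W ?p - W z))"
    using fUm_eq_primitive_near[where lam = lam, OF assms(1-3)] by blast
  define g where "g z = 1 - z / ?p + of_real lam * z * (W ?p - W z)" for z
  define g' where "g' = - 1 / ?p - of_real lam * ?p * \<omega> ?p"
  have p_in: "?p \<in> ball ?p r" using r by simp
  have "g holomorphic_on ball ?p r"
    unfolding g_def using W holomorphic_on_open[OF open_ball]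
    by (intro holomorphic_intros) blast+
  moreover have "(g has_field_derivative g') (at ?p)"
    unfolding g_def g'_def using W[OF p_in] assms(4)
    by (auto intro!: derivative_eq_intros simp: algebra_simps)
  moreover have "g ?p = 0" unfolding g_def using assms(4) by simp
  moreover have g'_eq: "g' = - (1 + of_real (lam * p^2) * \<omega> ?p) / ?p"
    unfolding g'_def using assms(4) by (simp add: field_simps power2_eq_square)
  then have "g' \<noteq> 0"
    using nonzero assms(4)
    by (simp only: divide_eq_0_iff neg_equal_0_iff_equal of_real_eq_0_iff simp_thms)
  ultimately have residue_g: "residue (\<lambda>z. id z / g z) ?p = id ?p / g'"
    by (intro residue_simple_pole_deriv[where s = "ball ?p r"]) (use p_in assms(4) in auto)
  have "residue (fUm lam p \<omega>) ?p = residue (\<lambda>z. id z / g z) ?p"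
    using f_eq eventually_at_in_open'[OF open_ball p_in]
    by (intro residue_cong) (auto elim!: eventually_mono simp: g_def)
  also have "\<dots> = ?p / (- (1 + of_real (lam * p^2) * \<omega> ?p) / ?p)"
    unfolding residue_g g'_eq by simp
  also have "\<dots> = - (?p^2) / (1 + of_real (lam * p^2) * \<omega> ?p)"
    by (simp only: divide_divide_eq_right divide_minus_right minus_divide_left power2_eq_square)
  finally show ?thesis .
qed

lemma residue_fUm_admissible:
  fixes lam p :: real
  assumes "admissible_omega \<omega>" "\<bar>lam\<bar> \<le> 1" "p \<noteq> 0" "\<bar>p\<bar> < 1"
  shows "residue (fUm lam p \<omega>) (of_real p)
           = - ((of_real p)^2) / (1 + of_real (lam * p^2) * \<omega> (of_real p))"
proof -
  have p_in: "complex_of_real p \<in> ball 0 1" using assms(4) by simp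
  then have "norm (\<omega> (of_real p)) \<le> 1"
    using assms(1) by (simp add: admissible_omega_def)
  then have "1 - \<bar>lam * p^2\<bar> \<le> norm (1 + of_real (lam * p^2) * \<omega> (of_real p))"
    by (rule norm_one_plus_scaled_bounds)
  then have "1 + of_real (lam * p^2) * \<omega> (of_real p) \<noteq> 0"
    using abs_mult_square_less_one[OF assms(2,4)] by auto
  with assms(1,3) p_in show ?thesis
    unfolding admissible_omega_def by (intro residue_fUm[where S = "ball 0 1"]) auto
qed

lemma admissible_omega_const: "admissible_omega (\<lambda>_. u) \<longleftrightarrow> norm u \<le> 1"
  by (auto simp: admissible_omega_def intro: exI[where x = 0])

lemma residue_fUm_range:
  fixes lam p :: real
  assumes "\<bar>lam\<bar> \<le> 1" "p \<noteq> 0" "\<bar>p\<bar> < 1"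
  shows "{residue (fUm lam p \<omega>) (of_real p) | \<omega>. admissible_omega \<omega>}
           = (\<lambda>u. - ((of_real p)^2) / (1 + of_real (lam * p^2) * u)) ` cball 0 1"
    (is "?R = ?\<Phi> ` _")
proof
  show "?R \<subseteq> ?\<Phi> ` cball 0 1"
  proof
    fix x assume "x \<in> ?R"
    then obtain \<omega> where \<omega>: "admissible_omega \<omega>" "x = residue (fUm lam p \<omega>) (of_real p)"
      by blast
    moreover have "\<omega> (of_real p) \<in> cball 0 1"
      using \<omega>(1) assms(3) by (simp add: admissible_omega_def)
    ultimately show "x \<in> ?\<Phi> ` cball 0 1"
      unfolding residue_fUm_admissible[OF \<omega>(1) assms] by blast
  qed
  show "?\<Phi> ` cball 0 1 \<subseteq> ?R"
  proof
    fix x assume "x \<in> ?\<Phi> ` cball 0 1"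
    then obtain u where u: "norm u \<le> 1" "x = ?\<Phi> u" by auto
    then have const: "admissible_omega (\<lambda>_. u)" by (simp add: admissible_omega_const)
    then have "x = residue (fUm lam p (\<lambda>_. u)) (of_real p)"
      unfolding residue_fUm_admissible[OF const assms] u(2) by simp
    with const show "x \<in> ?R" by blast
  qed
qed

lemma norm_residue_fUm_bounds:
  fixes lam p :: real
  assumes "admissible_omega \<omega>" "\<bar>lam\<bar> \<le> 1" "p \<noteq> 0" "\<bar>p\<bar> < 1"
  shows "p^2 / (1 + \<bar>lam\<bar> * p^2) \<le> norm (residue (fUm lam p \<omega>) (of_real p))"
    and "norm (residue (fUm lam p \<omega>) (of_real p)) \<le> p^2 / (1 - \<bar>lam\<bar> * p^2)"
proof -
  have "norm (\<omega> (of_real p)) \<le> 1"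
    using assms(1,4) by (simp add: admissible_omega_def)
  note bounds = norm_divide_one_plus_scaled_bounds[OF abs_mult_square_less_one[OF assms(2,4)] this]
  have "norm (- ((complex_of_real p)^2)) = p^2" and "\<bar>lam * p^2\<bar> = \<bar>lam\<bar> * p^2"
    by (simp_all add: norm_power abs_mult)
  with bounds[of "- ((of_real p)^2)"] show
    "p^2 / (1 + \<bar>lam\<bar> * p^2) \<le> norm (residue (fUm lam p \<omega>) (of_real p))"
    "norm (residue (fUm lam p \<omega>) (of_real p)) \<le> p^2 / (1 - \<bar>lam\<bar> * p^2)"
    unfolding residue_fUm_admissible[OF assms] by simp_all
qed

lemma norm_residue_fUm_const_minus_one:
  fixes lam p :: real
  assumes "0 \<le> lam" "lam \<le> 1" "p \<noteq> 0" "\<bar>p\<bar> < 1"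
  shows "norm (residue (fUm lam p (\<lambda>_. -1)) (of_real p)) = p^2 / (1 - lam * p^2)"
proof -
  have const: "admissible_omega (\<lambda>_. -1)" by (simp add: admissible_omega_const)
  have "\<bar>lam\<bar> \<le> 1" using assms(1,2) by simp
  note residue = residue_fUm_admissible[OF const this assms(3,4)]
  have "1 + of_real (lam * p^2) * -1 = complex_of_real (1 - lam * p^2)" by simp
  moreover have "0 < 1 - lam * p^2"
    using abs_mult_square_less_one[of lam p] assms by simp
  ultimately show ?thesis
    unfolding residue
    by (simp only: norm_divide norm_minus_cancel norm_power norm_of_real abs_of_pos) simp
qed

theorem corollary2:
  fixes lam p :: real
  assumes "0 < lam" "lam < 1" "0 < p" "p < 1"
  shows "{residue (fUm lam p \<omega>) (complex_of_real p) | \<omega>. admissible_omega \<omega>}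
           = (\<lambda>u. - ((complex_of_real p)^2) / (1 + complex_of_real (lam * p^2) * u)) ` cball 0 1
      \<and> (\<forall>\<omega>. admissible_omega \<omega> \<longrightarrow>
           p^2 / (1 + lam * p^2) \<le> norm (residue (fUm lam p \<omega>) (complex_of_real p)) \<and>
           norm (residue (fUm lam p \<omega>) (complex_of_real p)) \<le> p^2 / (1 - lam * p^2))
      \<and> admissible_omega (\<lambda>_. -1)
      \<and> norm (residue (fUm lam p (\<lambda>_. -1)) (complex_of_real p)) = p^2 / (1 - lam * p^2)"
proof -
  have lam: "\<bar>lam\<bar> \<le> 1" and p: "p \<noteq> 0" "\<bar>p\<bar> < 1"
    using assms by auto
  have "p^2 / (1 + lam * p^2) \<le> norm (residue (fUm lam p \<omega>) (of_real p)) \<and>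
        norm (residue (fUm lam p \<omega>) (of_real p)) \<le> p^2 / (1 - lam * p^2)"
    if "admissible_omega \<omega>" for \<omega>
    using norm_residue_fUm_bounds[OF that lam p] assms(1) by simp
  moreover have "admissible_omega (\<lambda>_. -1)"
    by (simp add: admissible_omega_const)
  moreover have "norm (residue (fUm lam p (\<lambda>_. -1)) (of_real p)) = p^2 / (1 - lam * p^2)"
    using norm_residue_fUm_const_minus_one assms p by simp
  ultimately show ?thesis
    using residue_fUm_range[OF lam p] by blast
qed

end
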